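(* For every Sauer Matrix $S$ of size $k$, the set \[ \mathcal{P}(S) = \{ r \in [0,1]^k : \Delta_\ell(r+S) \le 1 \text{ for each } 1 \le \ell \le k\} \] is a polytope.
   Context: For a real matrix $M$ and $\ell\ge1$, $\Delta_\ell(M)$ denotes the maximum of $|\det(B)|$ over all $\ell\times\ell$ submatrices $B$ of $M$. For $r\in\mathbb{R}^k$ and a matrix $S$ with $k$ rows and columns $S_1,\dots,S_N$, $r+S$ is the matrix with columns $r+S_i$. A Sauer Matrix of size $k$ is a matrix $S\in\{-1,0,1\}^{k\times 2^k}$ such that every subset of $[k]$ is the support (set of nonzero coordinates) of exactly one column, the nonzero entries being arbitrary elements of $\{-1,1\}$. *)

theory Defs
  imports "HOL-Analysis.Analysis" "Jordan_Normal_Form.Determinant"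
begin

text \<open>Matrices with k rows and N columns are represented as real^'c^'n:
 rows are indexed by the finite type 'n (CARD('n) = k), columns by the finite type 'c.\<close>

text \<open>A submatrix is given by an injective choice of l rows and l columns; the
 order of the chosen rows/columns only changes the sign of the determinant.\<close>
definition sub_abs_dets :: "nat \<Rightarrow> real^'c^'n \<Rightarrow> real set" where
  "sub_abs_dets l M =
     {\<bar>Determinant.det (Matrix.mat l l (\<lambda>(i,j). vec_nth (vec_nth M (f i)) (g j)))\<bar> | f g.
        inj_on f {..<l} \<and> inj_on g {..<l}}"

definition Delta :: "nat \<Rightarrow> real^'c^'n \<Rightarrow> real" where
  "Delta l M = Max (sub_abs_dets l M)"

definition add_col :: "real^'n \<Rightarrow> real^'c^'n \<Rightarrow> real^'c^'n" where
  "add_col r S = (\<chi> i c. vec_nth r i + vec_nth (vec_nth S i) c)"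

definition sauer_matrix :: "real^'c^'n \<Rightarrow> bool" where
  "sauer_matrix S \<longleftrightarrow>
     CARD('c) = 2 ^ CARD('n) \<and>
     (\<forall>i c. vec_nth (vec_nth S i) c \<in> {-1, 0, 1}) \<and>
     (\<forall>A :: 'n set. \<exists>!c. {i. vec_nth (vec_nth S i) c \<noteq> 0} = A)"

definition PS :: "real^'c^'n \<Rightarrow> (real^'n) set" where
  "PS S = {r. (\<forall>i. 0 \<le> vec_nth r i \<and> vec_nth r i \<le> 1) \<and>
              (\<forall>l. 1 \<le> l \<and> l \<le> CARD('n) \<longrightarrow> Delta l (add_col r S) \<le> 1)}"

end

theory Submission
  imports Defs
begin

text \<open>Every entry of a submatrix of r + S is an affine function of r, and adding the
  same number u_i to all entries of row i changes an l x l determinant by a quantity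
  that is linear in u (terms using two such constant rows cancel). Hence each
  constraint |det B| \<le> 1 on a submatrix B of r + S is the intersection of two
  half-spaces in r. As there are finitely many submatrices, P(S) is the unit cube
  intersected with finitely many half-spaces, i.e. a polytope.\<close>

definition submatrix :: "nat \<Rightarrow> 'a^'c^'n \<Rightarrow> (nat \<Rightarrow> 'n) \<Rightarrow> (nat \<Rightarrow> 'c) \<Rightarrow> 'a mat" where
  "submatrix l M f g = Matrix.mat l l (\<lambda>(i,j). M $ f i $ g j)"

definition bordered_mat :: "nat \<Rightarrow> (nat \<Rightarrow> 'a::comm_ring_1) \<Rightarrow> 'a mat \<Rightarrow> 'a mat" where
  "bordered_mat l u A = Matrix.mat (Suc l) (Suc l) (\<lambda>(i,j).
     if i = 0 then (if j = 0 then 1 else 0) else if j = 0 then u (i-1) else A $$ (i-1, j-1))"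

definition column_differencing_mat :: "nat \<Rightarrow> 'a::comm_ring_1 mat" where
  "column_differencing_mat l = Matrix.mat (Suc l) (Suc l) (\<lambda>(i,j).
     if i = j then 1 else if i = 0 then -1 else 0)"

definition bordered_shift_mat :: "nat \<Rightarrow> (nat \<Rightarrow> 'a::comm_ring_1) \<Rightarrow> (nat \<Rightarrow> nat \<Rightarrow> 'a) \<Rightarrow> 'a mat" where
  "bordered_shift_mat l u B = Matrix.mat (Suc l) (Suc l) (\<lambda>(i,j).
     if i = 0 then (if j = 0 then 1 else -1) else if j = 0 then u (i-1) else B (i-1) (j-1))"

lemma det_column_differencing_mat: "Determinant.det (column_differencing_mat l :: 'a::comm_ring_1 mat) = 1"
proof -
  have "Determinant.det (column_differencing_mat l :: 'a mat) = prod_list (diag_mat (column_differencing_mat l))"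
    by (rule det_upper_triangular[of _ "Suc l"])
      (auto simp: upper_triangular_def column_differencing_mat_def)
  also have "\<dots> = 1"
    by (simp add: prod_list_diag_prod column_differencing_mat_def)
  finally show ?thesis .
qed

lemma det_bordered_mat:
  assumes "A \<in> carrier_mat l l"
  shows "Determinant.det (bordered_mat l u A) = Determinant.det A"
proof -
  let ?A' = "bordered_mat l u A"
  have "Determinant.det ?A' = (\<Sum>j<Suc l. ?A' $$ (0,j) * cofactor ?A' 0 j)"
    by (rule laplace_expansion_row) (auto simp: bordered_mat_def)
  also have "\<dots> = (\<Sum>j<Suc l. if j = 0 then cofactor ?A' 0 j else 0)"
    by (intro sum.cong) (auto simp: bordered_mat_def)
  also have "\<dots> = cofactor ?A' 0 0"
    by (simp add: sum.delta')
  also have "mat_delete ?A' 0 0 = A"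
    using assms by (intro eq_matI) (auto simp: mat_delete_def bordered_mat_def)
  then have "cofactor ?A' 0 0 = Determinant.det A"
    by (simp add: cofactor_def)
  finally show ?thesis .
qed

lemma bordered_mat_mult_column_differencing_mat:
  assumes "A = Matrix.mat l l (\<lambda>(i,j). u i + B i j)"
  shows "bordered_mat l u A * column_differencing_mat l = bordered_shift_mat l u B"
proof (rule eq_matI)
  let ?A' = "bordered_mat l u A" and ?E = "column_differencing_mat l"
  fix i j assume "i < dim_row (bordered_shift_mat l u B)" "j < dim_col (bordered_shift_mat l u B)"
  then have i: "i < Suc l" and j: "j < Suc l"
    by (auto simp: bordered_shift_mat_def)
  have "(?A' * ?E) $$ (i,j) = (\<Sum>k<Suc l. ?A' $$ (i,k) * ?E $$ (k,j))"
    using i j by (simp add: bordered_mat_def column_differencing_mat_def scalar_prod_def atLeast0LessThan)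
  also have "\<dots> = (\<Sum>k<Suc l. (if k = j then ?A' $$ (i,k) else 0)
                    - (if k = 0 \<and> j \<noteq> 0 then ?A' $$ (i,k) else 0))"
    using j by (intro sum.cong) (auto simp: column_differencing_mat_def)
  also have "\<dots> = ?A' $$ (i,j) - (if j \<noteq> 0 then ?A' $$ (i,0) else 0)"
    using j by (simp add: sum_subtractf sum.delta')
  also have "\<dots> = bordered_shift_mat l u B $$ (i,j)"
    using i j assms by (auto simp: bordered_mat_def bordered_shift_mat_def)
  finally show "(?A' * ?E) $$ (i,j) = bordered_shift_mat l u B $$ (i,j)" .
qed (auto simp: bordered_mat_def column_differencing_mat_def bordered_shift_mat_def)

text \<open>Bordering (u_i + B_ij) by the row (1, 0, ..., 0) and the column (1, u) keeps the
  determinant; subtracting the new first column from all others then removes u from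
  every column but the first, so Laplace expansion along it is affine in u.\<close>

lemma det_row_shift:
  fixes u :: "nat \<Rightarrow> 'a::comm_ring_1"
  shows "Determinant.det (Matrix.mat l l (\<lambda>(i,j). u i + B i j)) =
     cofactor (bordered_shift_mat l (\<lambda>_. 0) B) 0 0
     + (\<Sum>i<l. u i * cofactor (bordered_shift_mat l (\<lambda>_. 0) B) (Suc i) 0)"
proof -
  define A where "A = Matrix.mat l l (\<lambda>(i,j). u i + B i j)"
  let ?M = "bordered_shift_mat l u B"
  let ?N = "bordered_shift_mat l (\<lambda>_. 0) B"
  have "Determinant.det A = Determinant.det (bordered_mat l u A) * Determinant.det (column_differencing_mat l)"
    by (simp add: det_bordered_mat A_def det_column_differencing_mat)
  also have "\<dots> = Determinant.det (bordered_mat l u A * column_differencing_mat l)"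
    by (rule det_mult[of _ "Suc l", symmetric])
      (auto simp: bordered_mat_def column_differencing_mat_def)
  also have "\<dots> = Determinant.det ?M"
    by (simp add: bordered_mat_mult_column_differencing_mat[OF A_def])
  also have "\<dots> = (\<Sum>i<Suc l. ?M $$ (i,0) * cofactor ?M i 0)"
    by (rule laplace_expansion_column) (auto simp: bordered_shift_mat_def)
  also have "\<dots> = (\<Sum>i<Suc l. ?M $$ (i,0) * cofactor ?N i 0)"
  proof (intro sum.cong refl arg_cong2[where f="(*)"])
    fix i
    have "mat_delete ?M i 0 = mat_delete ?N i 0"
      by (intro eq_matI) (auto simp: mat_delete_def bordered_shift_mat_def)
    then show "cofactor ?M i 0 = cofactor ?N i 0"
      by (simp add: cofactor_def)
  qed
  also have "\<dots> = cofactor ?N 0 0 + (\<Sum>i<l. u i * cofactor ?N (Suc i) 0)"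
    by (subst sum.lessThan_Suc_shift) (simp add: bordered_shift_mat_def)
  finally show ?thesis by (simp add: A_def)
qed

lemma det_submatrix_add_col_affine:
  fixes S :: "real^'c^'n"
  obtains a b where "\<And>r. Determinant.det (submatrix l (add_col r S) f g) = a \<bullet> r + b"
proof
  let ?N = "bordered_shift_mat l (\<lambda>_. 0) (\<lambda>i j. S $ f i $ g j)"
  define a :: "real^'n" where "a = (\<Sum>i<l. cofactor ?N (Suc i) 0 *\<^sub>R axis (f i) 1)"
  fix r
  have "a \<bullet> r = (\<Sum>i<l. r $ f i * cofactor ?N (Suc i) 0)"
    by (simp add: a_def inner_sum_left inner_axis' mult.commute)
  then show "Determinant.det (submatrix l (add_col r S) f g) = a \<bullet> r + cofactor ?N 0 0"
    by (simp add: submatrix_def add_col_def det_row_shift)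
qed

lemma polyhedron_abs_affine_le:
  fixes a :: "'a::euclidean_space"
  shows "polyhedron {x. \<bar>a \<bullet> x + b\<bar> \<le> c}"
proof -
  have "{x. \<bar>a \<bullet> x + b\<bar> \<le> c} = {x. a \<bullet> x \<le> c - b} \<inter> {x. (-a) \<bullet> x \<le> c + b}"
    by auto
  then show ?thesis
    by (simp only:) (intro polyhedron_Int polyhedron_halfspace_le)
qed

lemma polyhedron_submatrix_add_col_det_le:
  fixes S :: "real^'c^'n"
  shows "polyhedron {r. \<bar>Determinant.det (submatrix l (add_col r S) f g)\<bar> \<le> c}"
proof -
  obtain a b where "\<And>r. Determinant.det (submatrix l (add_col r S) f g) = a \<bullet> r + b"
    using det_submatrix_add_col_affine[of l S f g] by blast
  then show ?thesis
    by (simp add: polyhedron_abs_affine_le)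
qed

text \<open>Injective index maps, normalised to be undefined outside {..<l} so that the
  set of all of them is finite.\<close>

definition index_choices :: "nat \<Rightarrow> ((nat \<Rightarrow> 'n::finite) \<times> (nat \<Rightarrow> 'c::finite)) set" where
  "index_choices l = {(f,g). f \<in> {..<l} \<rightarrow>\<^sub>E UNIV \<and> g \<in> {..<l} \<rightarrow>\<^sub>E UNIV
                             \<and> inj_on f {..<l} \<and> inj_on g {..<l}}"

lemma finite_index_choices: "finite (index_choices l)"
proof (rule finite_subset)
  show "index_choices l \<subseteq> ({..<l} \<rightarrow>\<^sub>E UNIV) \<times> ({..<l} \<rightarrow>\<^sub>E UNIV)"
    by (auto simp: index_choices_def)
qed (intro finite_cartesian_product finite_PiE; simp)

lemma index_choices_nonempty:
  assumes "l \<le> CARD('n::finite)" "l \<le> CARD('c::finite)"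
  shows "index_choices l \<noteq> ({} :: ((nat \<Rightarrow> 'n) \<times> (nat \<Rightarrow> 'c)) set)"
proof -
  obtain f :: "nat \<Rightarrow> 'n" where "inj_on f {..<l}"
    using card_le_inj[of "{..<l}" "UNIV :: 'n set"] assms by auto
  moreover obtain g :: "nat \<Rightarrow> 'c" where "inj_on g {..<l}"
    using card_le_inj[of "{..<l}" "UNIV :: 'c set"] assms by auto
  ultimately have "(restrict f {..<l}, restrict g {..<l}) \<in> index_choices l"
    by (auto simp: index_choices_def inj_on_def)
  then show ?thesis by blast
qed

lemma submatrix_restrict: "submatrix l M (restrict f {..<l}) (restrict g {..<l}) = submatrix l M f g"
  by (intro eq_matI) (auto simp: submatrix_def)

lemma sub_abs_dets_eq_image:
  "sub_abs_dets l M = (\<lambda>(f,g). \<bar>Determinant.det (submatrix l M f g)\<bar>) ` index_choices l"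
proof (intro equalityI subsetI)
  fix x assume "x \<in> sub_abs_dets l M"
  then obtain f g where fg: "inj_on f {..<l}" "inj_on g {..<l}"
    and x: "x = \<bar>Determinant.det (submatrix l M f g)\<bar>"
    by (auto simp: sub_abs_dets_def submatrix_def)
  have "(restrict f {..<l}, restrict g {..<l}) \<in> index_choices l"
    using fg by (auto simp: index_choices_def inj_on_def)
  with x show "x \<in> (\<lambda>(f,g). \<bar>Determinant.det (submatrix l M f g)\<bar>) ` index_choices l"
    by (force simp: submatrix_restrict)
qed (auto simp: index_choices_def sub_abs_dets_def submatrix_def)

lemma Delta_le_iff:
  fixes M :: "real^'c^'n"
  assumes "l \<le> CARD('n)" "l \<le> CARD('c)"
  shows "Delta l M \<le> t \<longleftrightarrow>
    (\<forall>(f,g) \<in> index_choices l. \<bar>Determinant.det (submatrix l M f g)\<bar> \<le> t)"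
  \<comment> \<open>the bounds make the set of minors nonempty, where Max is meaningful\<close>
  using index_choices_nonempty[OF assms]
  by (auto simp: Delta_def sub_abs_dets_eq_image finite_index_choices)

lemma PS_eq_cube_Int:
  fixes S :: "real^'c^'n"
  assumes "CARD('n) \<le> CARD('c)"
  shows "PS S = cbox 0 1 \<inter> (\<Inter>l \<in> {1..CARD('n)}. \<Inter>(f,g) \<in> index_choices l.
                    {r. \<bar>Determinant.det (submatrix l (add_col r S) f g)\<bar> \<le> 1})"
proof -
  have Delta_le_1_iff: "Delta l (add_col r S) \<le> 1 \<longleftrightarrow>
      (\<forall>(f,g) \<in> index_choices l. \<bar>Determinant.det (submatrix l (add_col r S) f g)\<bar> \<le> 1)"
    if "l \<le> CARD('n)" for l r
    using that assms by (intro Delta_le_iff) auto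
  show ?thesis
    by (auto simp: PS_def mem_box_cart Delta_le_1_iff) force
qed

lemma sauer_matrix_card_rows_le_cols:
  fixes S :: "real^'c^'n"
  assumes "sauer_matrix S"
  shows "CARD('n) \<le> CARD('c)"
  using assms less_exp[of "CARD('n)"] by (simp add: sauer_matrix_def)

theorem proposition4p1:
  fixes S :: "real^'c^'n"
  assumes "sauer_matrix S"
  shows "polytope (PS S)"
proof -
  have "polyhedron (\<Inter>(f,g) \<in> index_choices l.
          {r. \<bar>Determinant.det (submatrix l (add_col r S) f g)\<bar> \<le> 1})" for l
    by (intro polyhedron_Inter finite_imageI finite_index_choices)
      (auto simp: polyhedron_submatrix_add_col_det_le)
  then show ?thesis
    unfolding PS_eq_cube_Int[OF sauer_matrix_card_rows_le_cols[OF assms]]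
    by (intro polytope_Int_polyhedron polytope_interval polyhedron_Inter finite_imageI
        finite_atLeastAtMost) auto
qed

end
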